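(* Let $X$ be a two-sided quaternionic Banach space and $T\in\mathcal{B}(X)$. Then for every $s\in\rho_S(T)$, $$\mathcal{Y}_L(s,T)=T\,S_L^{-1}(s,T)\,s,$$ where $\mathcal{Y}_L(s,T)=S_L^{-1}(s,T)s^2-s\mathcal{I}$ is the left spherical Yosida approximation of $T$.
   Context: $\mathbb{H}$ denotes the real algebra of quaternions; for $s\in\mathbb{H}$, $\overline{s}$ is its conjugate, $\mathrm{Re}(s)$ its real part and $|s|$ its modulus. $X$ is a two-sided vector space over $\mathbb{H}$ which is a Banach space; $\mathcal{B}(X)$ is the algebra of bounded right $\mathbb{H}$-linear operators on $X$ (i.e. $T(uq+v)=(Tu)q+Tv$ for $u,v\in X$, $q\in\mathbb{H}$), with identity $\mathcal{I}$ and operator norm. For operators and quaternions, $(sT)(v)=s(Tv)$ and $(Ts)(v)=T(sv)$. For $s\in\mathbb{H}$ put $Q_s(T)=T^2-2\mathrm{Re}(s)T+|s|^2\mathcal{I}$. The $S$-resolvent set is $\rho_S(T)=\{s\in\mathbb{H}: Q_s(T)\text{ is invertible in }\mathcal{B}(X)\}$, and the $S$-spectrum is $\sigma_S(T)=\mathbb{H}\setminus\rho_S(T)$. For $s\in\rho_S(T)$ the left $S$-resolvent operator is $S_L^{-1}(s,T)=Q_s(T)^{-1}(\overline{s}\mathcal{I}-T)$. *)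

theory Defs
  imports Complex_Main
begin

datatype quat = Quat (qre: real) (qi: real) (qj: real) (qk: real)

definition qof_real :: "real \<Rightarrow> quat" where
  "qof_real r = Quat r 0 0 0"

definition qone :: quat where
  "qone = Quat 1 0 0 0"

definition qadd :: "quat \<Rightarrow> quat \<Rightarrow> quat" where
  "qadd p q = Quat (qre p + qre q) (qi p + qi q) (qj p + qj q) (qk p + qk q)"

definition qmul :: "quat \<Rightarrow> quat \<Rightarrow> quat" where
  "qmul p q = Quat
     (qre p * qre q - qi p * qi q - qj p * qj q - qk p * qk q)
     (qre p * qi q + qi p * qre q + qj p * qk q - qk p * qj q)
     (qre p * qj q - qi p * qk q + qj p * qre q + qk p * qi q)
     (qre p * qk q + qi p * qj q - qj p * qi q + qk p * qre q)"

definition qcnj :: "quat \<Rightarrow> quat" where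
  "qcnj q = Quat (qre q) (- qi q) (- qj q) (- qk q)"

definition qnorm :: "quat \<Rightarrow> real" where
  "qnorm q = sqrt ((qre q)\<^sup>2 + (qi q)\<^sup>2 + (qj q)\<^sup>2 + (qk q)\<^sup>2)"

text \<open>The space X is a real Banach space (type class banach) equipped with a left
  action Lm (Lm q v = q v) and a right action Rm (Rm q v = v q) of the quaternions,
  making it a two-sided quaternionic vector space whose real scalar multiplications
  agree with the real vector structure, and whose norm satisfies
  norm (q v) = norm (v q) = |q| norm v.\<close>

definition two_sided_qbanach :: "(quat \<Rightarrow> 'v::banach \<Rightarrow> 'v) \<Rightarrow> (quat \<Rightarrow> 'v \<Rightarrow> 'v) \<Rightarrow> bool" where
  "two_sided_qbanach Lm Rm \<longleftrightarrow>
     (\<forall>p q v. Lm (qmul p q) v = Lm p (Lm q v)) \<and>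
     (\<forall>p q v. Rm (qmul p q) v = Rm q (Rm p v)) \<and>
     (\<forall>v. Lm qone v = v) \<and> (\<forall>v. Rm qone v = v) \<and>
     (\<forall>p q v. Lm (qadd p q) v = Lm p v + Lm q v) \<and>
     (\<forall>p q v. Rm (qadd p q) v = Rm p v + Rm q v) \<and>
     (\<forall>q u v. Lm q (u + v) = Lm q u + Lm q v) \<and>
     (\<forall>q u v. Rm q (u + v) = Rm q u + Rm q v) \<and>
     (\<forall>p q v. Lm p (Rm q v) = Rm q (Lm p v)) \<and>
     (\<forall>r v. Lm (qof_real r) v = r *\<^sub>R v) \<and>
     (\<forall>r v. Rm (qof_real r) v = r *\<^sub>R v) \<and>
     (\<forall>q v. norm (Lm q v) = qnorm q * norm v) \<and>
     (\<forall>q v. norm (Rm q v) = qnorm q * norm v)"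

definition qbounded_op :: "(quat \<Rightarrow> 'v::banach \<Rightarrow> 'v) \<Rightarrow> ('v \<Rightarrow> 'v) \<Rightarrow> bool" where
  "qbounded_op Rm T \<longleftrightarrow>
     (\<forall>u v q. T (Rm q u + v) = Rm q (T u) + T v) \<and>
     (\<exists>K. \<forall>v. norm (T v) \<le> K * norm v)"

definition qinvertible :: "(quat \<Rightarrow> 'v::banach \<Rightarrow> 'v) \<Rightarrow> ('v \<Rightarrow> 'v) \<Rightarrow> bool" where
  "qinvertible Rm A \<longleftrightarrow>
     (\<exists>B. qbounded_op Rm B \<and> (\<forall>v. B (A v) = v) \<and> (\<forall>v. A (B v) = v))"

definition qinverse :: "(quat \<Rightarrow> 'v::banach \<Rightarrow> 'v) \<Rightarrow> ('v \<Rightarrow> 'v) \<Rightarrow> ('v \<Rightarrow> 'v)" where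
  "qinverse Rm A = (THE B. qbounded_op Rm B \<and> (\<forall>v. B (A v) = v) \<and> (\<forall>v. A (B v) = v))"

definition Qs :: "quat \<Rightarrow> ('v::banach \<Rightarrow> 'v) \<Rightarrow> ('v \<Rightarrow> 'v)" where
  "Qs s T = (\<lambda>v. T (T v) - (2 * qre s) *\<^sub>R T v + (qnorm s)\<^sup>2 *\<^sub>R v)"

definition S_resolvent_set :: "(quat \<Rightarrow> 'v::banach \<Rightarrow> 'v) \<Rightarrow> ('v \<Rightarrow> 'v) \<Rightarrow> quat set" where
  "S_resolvent_set Rm T = {s. qinvertible Rm (Qs s T)}"

definition S_spectrum :: "(quat \<Rightarrow> 'v::banach \<Rightarrow> 'v) \<Rightarrow> ('v \<Rightarrow> 'v) \<Rightarrow> quat set" where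
  "S_spectrum Rm T = UNIV - S_resolvent_set Rm T"

definition SL_resolvent ::
  "(quat \<Rightarrow> 'v::banach \<Rightarrow> 'v) \<Rightarrow> (quat \<Rightarrow> 'v \<Rightarrow> 'v) \<Rightarrow> quat \<Rightarrow> ('v \<Rightarrow> 'v) \<Rightarrow> ('v \<Rightarrow> 'v)" where
  "SL_resolvent Lm Rm s T = (\<lambda>v. qinverse Rm (Qs s T) (Lm (qcnj s) v - T v))"

text \<open>Left spherical Yosida approximation Y_L(s,T) = S_L^{-1}(s,T) s^2 - s I,
  where (A s)(v) = A (s v) and (s I)(v) = s v.\<close>

definition Yosida_L ::
  "(quat \<Rightarrow> 'v::banach \<Rightarrow> 'v) \<Rightarrow> (quat \<Rightarrow> 'v \<Rightarrow> 'v) \<Rightarrow> quat \<Rightarrow> ('v \<Rightarrow> 'v) \<Rightarrow> ('v \<Rightarrow> 'v)" where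
  "Yosida_L Lm Rm s T = (\<lambda>v. SL_resolvent Lm Rm s T (Lm (qmul s s) v) - Lm s v)"

end

theory Submission
  imports Defs
begin

text \<open>The heart of the matter is the left S-resolvent equation
  \<open>S\<^sub>L\<^sup>-\<^sup>1(s,T) s - T S\<^sub>L\<^sup>-\<^sup>1(s,T) = \<I>\<close>: since \<open>Q\<^sub>s(T)\<close> commutes with \<open>T\<close>, so does its
  inverse, and the left-hand side becomes \<open>Q\<^sub>s(T)\<^sup>-\<^sup>1\<close> applied to
  \<open>conj(s) s - T (s + conj(s)) + T\<^sup>2 = |s|\<^sup>2 - 2 Re(s) T + T\<^sup>2 = Q\<^sub>s(T)\<close>.
  Applying the equation to \<open>s v\<close> gives \<open>S\<^sub>L\<^sup>-\<^sup>1(s,T) s\<^sup>2 - s = T S\<^sub>L\<^sup>-\<^sup>1(s,T) s\<close>.\<close>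

lemma qmul_qcnj_self: "qmul (qcnj s) s = qof_real ((qnorm s)\<^sup>2)"
  by (cases s) (simp add: qmul_def qcnj_def qof_real_def qnorm_def power2_eq_square algebra_simps)

lemma qadd_qcnj_self: "qadd (qcnj s) s = qof_real (2 * qre s)"
  by (cases s) (simp add: qadd_def qcnj_def qof_real_def)

lemma two_sided_qbanach_Lm_qcnj_Lm:
  assumes "two_sided_qbanach Lm Rm"
  shows "Lm (qcnj s) (Lm s v) = (qnorm s)\<^sup>2 *\<^sub>R v"
  using assms unfolding two_sided_qbanach_def by (metis qmul_qcnj_self)

lemma two_sided_qbanach_Lm_qcnj_add_Lm:
  assumes "two_sided_qbanach Lm Rm"
  shows "Lm (qcnj s) v + Lm s v = (2 * qre s) *\<^sub>R v"
  using assms unfolding two_sided_qbanach_def by (metis qadd_qcnj_self)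

lemma qbounded_op_linear:
  assumes "two_sided_qbanach Lm Rm" and "qbounded_op Rm T"
  shows "linear T"
proof -
  have Rm_one: "Rm qone v = v" and Rm_real: "Rm (qof_real r) v = r *\<^sub>R v" for r v
    using assms(1) unfolding two_sided_qbanach_def by simp_all
  have T_lin: "T (Rm q u + v) = Rm q (T u) + T v" for q u v
    using assms(2) unfolding qbounded_op_def by blast
  have T_add: "T (u + v) = T u + T v" for u v
    using T_lin[of qone] by (simp add: Rm_one)
  then have "T 0 = 0"
    by (metis add_cancel_right_right)
  then have "T (r *\<^sub>R u) = r *\<^sub>R T u" for r u
    using T_lin[of "qof_real r" u 0] by (simp add: Rm_real)
  with T_add show ?thesis
    by (rule linearI)
qed

lemma qinverse_inverse:
  assumes "qinvertible Rm A"
  shows "qbounded_op Rm (qinverse Rm A)"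
    and "qinverse Rm A (A v) = v"
    and "A (qinverse Rm A v) = v"
proof -
  let ?P = "\<lambda>B. qbounded_op Rm B \<and> (\<forall>v. B (A v) = v) \<and> (\<forall>v. A (B v) = v)"
  have "\<exists>!B. ?P B"
  proof -
    obtain B where "?P B"
      using assms unfolding qinvertible_def by blast
    moreover have "B' = B" if "?P B'" for B'
    proof
      fix v
      show "B' v = B v"
        using \<open>?P B\<close> that by metis
    qed
    ultimately show ?thesis
      by blast
  qed
  then have "?P (qinverse Rm A)"
    unfolding qinverse_def by (rule theI')
  then show "qbounded_op Rm (qinverse Rm A)" "qinverse Rm A (A v) = v" "A (qinverse Rm A v) = v"
    by simp_all
qed

lemma inverse_commute:
  assumes "\<And>v. B (A v) = v" and "\<And>v. A (B v) = v" and "\<And>v. A (T v) = T (A v)"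
  shows "B (T v) = T (B v)"
  by (metis assms)

lemma Qs_commute:
  assumes "linear T"
  shows "Qs s T (T v) = T (Qs s T v)"
  unfolding Qs_def by (simp add: linear_add linear_diff linear_scale assms)

lemma SL_resolvent_equation:
  assumes "two_sided_qbanach Lm Rm"
    and "qbounded_op Rm T"
    and "s \<in> S_resolvent_set Rm T"
  shows "SL_resolvent Lm Rm s T (Lm s v) - T (SL_resolvent Lm Rm s T v) = v"
proof -
  define B where "B = qinverse Rm (Qs s T)"
  have invertible: "qinvertible Rm (Qs s T)"
    using assms(3) unfolding S_resolvent_set_def by simp
  have "linear T"
    using assms(1,2) by (rule qbounded_op_linear)
  have "linear B"
    using assms(1) qinverse_inverse(1)[OF invertible] unfolding B_def by (rule qbounded_op_linear)
  have B_T: "B (T w) = T (B w)" for w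
    using qinverse_inverse(2,3)[OF invertible] Qs_commute[OF \<open>linear T\<close>] unfolding B_def
    by (rule inverse_commute)
  have T_Lm_add: "T (Lm s v) + T (Lm (qcnj s) v) = (2 * qre s) *\<^sub>R T v"
    using two_sided_qbanach_Lm_qcnj_add_Lm[OF assms(1), of s v] \<open>linear T\<close>
    by (metis add.commute linear_add linear_scale)
  then have "(Lm (qcnj s) (Lm s v) - T (Lm s v)) - (T (Lm (qcnj s) v) - T (T v)) = Qs s T v"
    unfolding Qs_def two_sided_qbanach_Lm_qcnj_Lm[OF assms(1)]
    by (simp add: algebra_simps flip: T_Lm_add)
  moreover have "SL_resolvent Lm Rm s T (Lm s v) - T (SL_resolvent Lm Rm s T v)
      = B ((Lm (qcnj s) (Lm s v) - T (Lm s v)) - T (Lm (qcnj s) v - T v))"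
    unfolding SL_resolvent_def B_def[symmetric] B_T[symmetric]
    by (rule linear_diff[OF \<open>linear B\<close>, symmetric])
  ultimately have "SL_resolvent Lm Rm s T (Lm s v) - T (SL_resolvent Lm Rm s T v) = B (Qs s T v)"
    by (simp add: linear_diff[OF \<open>linear T\<close>])
  also have "\<dots> = v"
    unfolding B_def by (rule qinverse_inverse(2)[OF invertible])
  finally show ?thesis .
qed

theorem lemma3p5:
  fixes Lm Rm :: "quat \<Rightarrow> 'v::banach \<Rightarrow> 'v" and T :: "'v \<Rightarrow> 'v" and s :: quat
  assumes "two_sided_qbanach Lm Rm"
    and "qbounded_op Rm T"
    and "s \<in> S_resolvent_set Rm T"
  shows "Yosida_L Lm Rm s T = (\<lambda>v. T (SL_resolvent Lm Rm s T (Lm s v)))"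
proof
  fix v
  have "Lm (qmul s s) v = Lm s (Lm s v)"
    using assms(1) unfolding two_sided_qbanach_def by simp
  then show "Yosida_L Lm Rm s T v = T (SL_resolvent Lm Rm s T (Lm s v))"
    using SL_resolvent_equation[OF assms, of "Lm s v"]
    unfolding Yosida_L_def by (simp add: diff_eq_eq add.commute)
qed

end
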